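(* Let $\Pi$ be a ground HEX-program and $\mathbf{A}$ an interpretation. Let $\mathcal{C}$ be the partition of $A(\Pi)$ into subset-maximal strongly connected components of the graph with edge relation $\rightarrow\cup\rightarrow_e$, let $C\in\mathcal{C}$ and $\Pi_C=\{r\in\Pi\mid H(r)\cap C\neq\emptyset\}$. If $U$ is an unfounded set of $\Pi_C$ with respect to $\mathbf{A}$ such that $U\subseteq C$, then $U$ is an unfounded set of $\Pi$ with respect to $\mathbf{A}$.
   Context: Ground HEX-programs. A ground ordinary atom is $p(c_1,\dots,c_\ell)$. A ground external atom is $\&g[\vec p](\vec c)$ with input list $\vec p$ (predicate names or constants) and output constants $\vec c$. A ground HEX-program is a finite set of rules $r$: $a_1\lor\dots\lor a_k\leftarrow b_1,\dots,b_m,\mathrm{not}\,b_{m+1},\dots,\mathrm{not}\,b_n$, with ordinary ground head atoms and each $b_j$ an ordinary or external ground atom; $H(r)=\{a_1,\dots,a_k\}$, $B^+(r)=\{b_1,\dots,b_m\}$, $B^-(r)=\{b_{m+1},\dots,b_n\}$, $B(r)$ the set of body literals. $A(\Pi)$ is the set of ordinary atoms occurring in $\Pi$. Interpretations: complete consistent sets $\mathbf{A}$ of signed literals $\mathbf{T}a$/$\mathbf{F}a$. $\mathbf{A}\models a$ (ordinary) iff $\mathbf{T}a\in\mathbf{A}$; $\mathbf{A}\models\&g[\vec p](\vec c)$ iff the Boolean oracle $f_{\&g}(\mathbf{A},\vec p,\vec c)=1$; $\mathbf{A}\models\mathrm{not}\,b$ iff $\mathbf{A}\not\models b$. Unfounded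 sets: for a set $X$ of ordinary ground atoms appearing in the program $P$, $\mathbf{A}\,\dot\cup\neg.\,X=(\mathbf{A}\setminus\{\mathbf{T}a\mid a\in X\})\cup\{\mathbf{F}a\mid a\in X\}$; $X$ is an unfounded set of $P$ w.r.t. $\mathbf{A}$ iff for every $r\in P$ with $H(r)\cap X\neq\emptyset$: (i) some literal of $B(r)$ is false w.r.t. $\mathbf{A}$, or (ii) some literal of $B(r)$ is false w.r.t. $\mathbf{A}\,\dot\cup\neg.\,X$, or (iii) some atom of $H(r)\setminus X$ is true w.r.t. $\mathbf{A}$. Dependencies: $x\rightarrow y$ iff some $r\in\Pi$ has $x\in H(r)$, $y\in B^+(r)$; $x\rightarrow_e y$ iff some $r\in\Pi$ has $x\in H(r)$ and an external atom $\&g[q_1,\dots,q_n](\vec e)\in B^+(r)\cup B^-(r)$ with some $q_i$ equal to the predicate of $y$. *)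

theory Defs
  imports Main
begin

datatype ('p, 'c) oatom = OAtom (opred: 'p) "'c list"

text \<open>Ground external atoms &g[p1,...,pn](c1,...,cm): external name, input list
  (each input is a predicate name (Inl) or a constant (Inr)), output constants.\<close>
datatype ('g, 'p, 'c) eatom = EAtom 'g "('p + 'c) list" "'c list"

datatype ('g, 'p, 'c) batom = Ord "('p, 'c) oatom" | Ext "('g, 'p, 'c) eatom"

record ('g, 'p, 'c) rule =
  H    :: "('p, 'c) oatom set"
  Bpos :: "('g, 'p, 'c) batom set"
  Bneg :: "('g, 'p, 'c) batom set"

type_synonym ('g, 'p, 'c) program = "('g, 'p, 'c) rule set"

definition ground_program :: "('g, 'p, 'c) program \<Rightarrow> bool" where
  "ground_program P \<longleftrightarrow> finite P \<and>
     (\<forall>r\<in>P. finite (H r) \<and> finite (Bpos r) \<and> finite (Bneg r))"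

definition atoms :: "('g, 'p, 'c) program \<Rightarrow> ('p, 'c) oatom set" where
  "atoms P = (\<Union>r\<in>P. H r \<union> {a. Ord a \<in> Bpos r \<union> Bneg r})"

text \<open>Interpretations: a complete consistent set of signed literals is represented
  by the set of ordinary atoms signed true (every other atom is signed false).\<close>
type_synonym ('g, 'p, 'c) ext_fun =
  "'g \<Rightarrow> ('p, 'c) oatom set \<Rightarrow> ('p + 'c) list \<Rightarrow> 'c list \<Rightarrow> bool"

fun sat_atom :: "('g, 'p, 'c) ext_fun \<Rightarrow> ('p, 'c) oatom set \<Rightarrow> ('g, 'p, 'c) batom \<Rightarrow> bool" where
  "sat_atom f A (Ord a) \<longleftrightarrow> a \<in> A"
| "sat_atom f A (Ext (EAtom g ps cs)) \<longleftrightarrow> f g A ps cs"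

definition body_false :: "('g, 'p, 'c) ext_fun \<Rightarrow> ('p, 'c) oatom set \<Rightarrow> ('g, 'p, 'c) rule \<Rightarrow> bool" where
  "body_false f A r \<longleftrightarrow> (\<exists>b\<in>Bpos r. \<not> sat_atom f A b) \<or> (\<exists>b\<in>Bneg r. sat_atom f A b)"

text \<open>A \<union>. \<not>.X : atoms of X are made false.\<close>
definition falsify :: "('p, 'c) oatom set \<Rightarrow> ('p, 'c) oatom set \<Rightarrow> ('p, 'c) oatom set" where
  "falsify A X = A - X"

definition unfounded :: "('g, 'p, 'c) ext_fun \<Rightarrow> ('g, 'p, 'c) program \<Rightarrow> ('p, 'c) oatom set
    \<Rightarrow> ('p, 'c) oatom set \<Rightarrow> bool" where
  "unfounded f P A X \<longleftrightarrow> X \<subseteq> atoms P \<and>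
     (\<forall>r\<in>P. H r \<inter> X \<noteq> {} \<longrightarrow>
        body_false f A r \<or> body_false f (falsify A X) r \<or> (\<exists>a \<in> H r - X. a \<in> A))"

definition dep :: "('g, 'p, 'c) program \<Rightarrow> ('p, 'c) oatom \<Rightarrow> ('p, 'c) oatom \<Rightarrow> bool" where
  "dep P x y \<longleftrightarrow> (\<exists>r\<in>P. x \<in> H r \<and> Ord y \<in> Bpos r)"

definition edep :: "('g, 'p, 'c) program \<Rightarrow> ('p, 'c) oatom \<Rightarrow> ('p, 'c) oatom \<Rightarrow> bool" where
  "edep P x y \<longleftrightarrow> (\<exists>r\<in>P. x \<in> H r \<and>
      (\<exists>g ps cs. Ext (EAtom g ps cs) \<in> Bpos r \<union> Bneg r \<and> Inl (opred y) \<in> set ps))"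

definition dep_graph :: "('g, 'p, 'c) program \<Rightarrow> (('p, 'c) oatom \<times> ('p, 'c) oatom) set" where
  "dep_graph P = {(x, y). x \<in> atoms P \<and> y \<in> atoms P \<and> (dep P x y \<or> edep P x y)}"

definition is_scc :: "('g, 'p, 'c) program \<Rightarrow> ('p, 'c) oatom set \<Rightarrow> bool" where
  "is_scc P C \<longleftrightarrow> C \<noteq> {} \<and> C \<subseteq> atoms P \<and>
     (\<forall>x\<in>C. \<forall>y\<in>C. (x, y) \<in> (dep_graph P)\<^sup>*) \<and>
     (\<forall>D. D \<subseteq> atoms P \<and> C \<subseteq> D \<and> (\<forall>x\<in>D. \<forall>y\<in>D. (x, y) \<in> (dep_graph P)\<^sup>*) \<longrightarrow> D = C)"

definition rules_of :: "('g, 'p, 'c) program \<Rightarrow> ('p, 'c) oatom set \<Rightarrow> ('g, 'p, 'c) program" where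
  "rules_of P C = {r \<in> P. H r \<inter> C \<noteq> {}}"

end

theory Submission
  imports Defs
begin

lemma atoms_mono: "Q \<subseteq> P \<Longrightarrow> atoms Q \<subseteq> atoms P"
  unfolding atoms_def by blast

lemma rules_of_subset: "rules_of P C \<subseteq> P"
  unfolding rules_of_def by blast

text \<open>Every rule whose head meets U already belongs to rules_of P C, so the
  unfoundedness conditions for P and for rules_of P C are the same; C need
  not be a strongly connected component.\<close>
lemma unfounded_rules_of_imp_unfounded:
  assumes "unfounded f (rules_of P C) A U" and "U \<subseteq> C"
  shows "unfounded f P A U"
  using assms atoms_mono[OF rules_of_subset[of P C]]
  unfolding unfounded_def rules_of_def by blast

theorem proposition4:
  fixes f :: "('g, 'p, 'c) ext_fun"
    and P :: "('g, 'p, 'c) program"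
    and A C U :: "('p, 'c) oatom set"
  assumes "ground_program P"
    and "is_scc P C"
    and "unfounded f (rules_of P C) A U"
    and "U \<subseteq> C"
  shows "unfounded f P A U"
  using assms(3,4) by (rule unfounded_rules_of_imp_unfounded)

end
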